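(* Let $n\geq 1$ and let $L$ be a Lie subalgebra of $\mathbb{W}_n$ with $\mathrm{GKdim}(L) = n$. Then $\dim_\Bbbk(L_{2,0}) = \infty$.
   Context: $\Bbbk$ is a field of characteristic zero, $\mathbb{W}_n = \sum_{k=1}^n \Bbbk[x_1,\dots,x_n]\partial_k$, $\partial_k = \partial/\partial x_k$. For a subalgebra $L$, $L_{2,0} = L \cap x_1^2\mathbb{W}_n = L\cap \sum_{k=1}^n x_1^2\Bbbk[x_1,\dots,x_n]\partial_k$. $\mathrm{GKdim}$ denotes Gelfand--Kirillov dimension of a Lie algebra: the supremum over finite-dimensional subspaces $V$ of the growth rate $\limsup_k \log\dim(V + C_1(V)+\dots+C_k(V))/\log k$, where $C_0(V)=V$ and $C_k(V) = [C_{k-1}(V),V]$. *)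

theory Defs
  imports Complex_Main "HOL-Library.Poly_Mapping" "HOL-Library.Function_Algebras"
          "HOL-Library.Extended_Real" "HOL-Library.Liminf_Limsup"
begin

text \<open>Polynomials in countably many variables x_0, x_1, ... over 'k:
  finitely supported maps from monomials (exponent vectors) to coefficients.
  Variable x_i of the paper is variable (i-1) here.\<close>
type_synonym 'k mpoly = "(nat \<Rightarrow>\<^sub>0 nat) \<Rightarrow>\<^sub>0 'k"

definition var_poly :: "nat \<Rightarrow> 'k::comm_ring_1 mpoly" where
  "var_poly i = Poly_Mapping.single (Poly_Mapping.single i 1) 1"

definition const_poly :: "'k::comm_ring_1 \<Rightarrow> 'k mpoly" where
  "const_poly c = Poly_Mapping.single 0 c"

definition poly_in :: "nat \<Rightarrow> 'k::comm_ring_1 mpoly \<Rightarrow> bool" where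
  "poly_in n p \<longleftrightarrow> (\<forall>m\<in>Poly_Mapping.keys p. \<forall>j. n \<le> j \<longrightarrow> Poly_Mapping.lookup m j = 0)"

definition pdiff :: "nat \<Rightarrow> 'k::comm_ring_1 mpoly \<Rightarrow> 'k mpoly" where
  "pdiff i p = (\<Sum>m\<in>Poly_Mapping.keys p. Poly_Mapping.single (m - Poly_Mapping.single i 1)
                                 (of_nat (Poly_Mapping.lookup m i) * Poly_Mapping.lookup p m))"

text \<open>Vector fields sum_k v k * d/dx_k, represented as coefficient functions.\<close>
type_synonym 'k vfield = "nat \<Rightarrow> 'k mpoly"

definition W :: "nat \<Rightarrow> 'k::comm_ring_1 vfield set" where
  "W n = {v. \<forall>i. (n \<le> i \<longrightarrow> v i = 0) \<and> poly_in n (v i)}"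

definition vscale :: "'k::comm_ring_1 \<Rightarrow> 'k vfield \<Rightarrow> 'k vfield" where
  "vscale c v = (\<lambda>j. const_poly c * v j)"

definition lie :: "nat \<Rightarrow> 'k::comm_ring_1 vfield \<Rightarrow> 'k vfield \<Rightarrow> 'k vfield" where
  "lie n v w = (\<lambda>j. \<Sum>i<n. v i * pdiff i (w j) - w i * pdiff i (v j))"

abbreviation vspan :: "'k::field vfield set \<Rightarrow> 'k vfield set" where
  "vspan \<equiv> module.span vscale"

abbreviation vdim :: "'k::field vfield set \<Rightarrow> nat" where
  "vdim \<equiv> vector_space.dim vscale"

definition lie_subalgebra :: "nat \<Rightarrow> 'k::field vfield set \<Rightarrow> bool" where
  "lie_subalgebra n L \<longleftrightarrow> L \<subseteq> W n \<and> 0 \<in> L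
     \<and> (\<forall>u\<in>L. \<forall>v\<in>L. u + v \<in> L)
     \<and> (\<forall>c. \<forall>u\<in>L. vscale c u \<in> L)
     \<and> (\<forall>u\<in>L. \<forall>v\<in>L. lie n u v \<in> L)"

fun lower_central :: "nat \<Rightarrow> 'k::field vfield set \<Rightarrow> nat \<Rightarrow> 'k vfield set" where
  "lower_central n V 0 = vspan V"
| "lower_central n V (Suc k) = vspan {lie n a b | a b. a \<in> lower_central n V k \<and> b \<in> V}"

definition growth_dim :: "nat \<Rightarrow> 'k::field vfield set \<Rightarrow> nat \<Rightarrow> nat" where
  "growth_dim n V k = vdim (vspan (\<Union>i\<le>k. lower_central n V i))"

definition GKdim :: "nat \<Rightarrow> 'k::field vfield set \<Rightarrow> ereal" where
  "GKdim n L = (SUP F\<in>{F. finite F \<and> F \<subseteq> L}.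
      limsup (\<lambda>k. ereal (ln (real (growth_dim n (vspan F) k)) / ln (real k))))"

text \<open>L_{2,0} = L \<inter> x_1^2 W_n: all coefficients divisible by x_1^2.\<close>
definition L20 :: "nat \<Rightarrow> 'k::field vfield set \<Rightarrow> 'k vfield set" where
  "L20 n L = {v \<in> L. \<forall>j. \<exists>g. v j = var_poly 0 ^ 2 * g}"

end

theory Submission
  imports Defs "HOL-Library.FuncSet" "HOL-Real_Asymp.Real_Asymp"
begin

text \<open>Reducing every coefficient of a vector field modulo \<open>x\<^sub>1\<^sup>2\<close> is a linear map whose
  kernel on \<open>L\<close> is exactly \<open>L\<^sub>2\<^sub>,\<^sub>0\<close>. On fields whose exponents are all at most \<open>e\<close> its image
  lies in a space of dimension \<open>2n(e+1)^(n-1)\<close>, because after reduction the exponent of \<open>x\<^sub>1\<close>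
  is at most \<open>1\<close>. A bracket adds exponent bounds, so for \<open>V\<close> spanned by a finite subset of \<open>L\<close>
  the spaces \<open>C\<^sub>i(V)\<close>, \<open>i \<le> k\<close>, have exponents \<open>O(k)\<close>. If \<open>L\<^sub>2\<^sub>,\<^sub>0\<close> were finite-dimensional,
  the growth of every such \<open>V\<close> would therefore be \<open>O(k^(n-1))\<close>, forcing \<open>GKdim L \<le> n - 1\<close>.\<close>

lemma (in vector_space) dim_le_card_kernel_image:
  assumes f: "module_hom scale scale f" and S: "subspace S"
    and image: "f ` S \<subseteq> span E" and "finite E"
    and kernel: "\<And>v. v \<in> S \<Longrightarrow> f v = 0 \<Longrightarrow> v \<in> span B" and "finite B"
  shows "dim S \<le> card B + card E"
proof -
  obtain I where I: "I \<subseteq> f ` S" "independent I" "f ` S \<subseteq> span I"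
    by (rule maximal_independent_subset)
  have "I \<subseteq> span E" using I(1) image by blast
  then have "finite I" "card I \<le> card E"
    using independent_span_bound[OF \<open>finite E\<close> I(2)] by auto
  have "\<forall>i\<in>I. \<exists>v. v \<in> S \<and> f v = i" using I(1) by blast
  then obtain g where g: "\<And>i. i \<in> I \<Longrightarrow> g i \<in> S \<and> f (g i) = i" by metis
  have "S \<subseteq> span (B \<union> g ` I)"
  proof
    fix v assume v: "v \<in> S"
    have "f ` g ` I = I" using g by (force simp: image_iff)
    then have "f v \<in> f ` span (g ` I)"
      using v I(3) module_hom.span_image[OF f, of "g ` I"] by auto
    then obtain w where w: "w \<in> span (g ` I)" "f v = f w" by blast
    have "span (g ` I) \<subseteq> S" using g by (intro span_minimal[OF _ S]) auto
    then have "w \<in> S" using w(1) by blast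
    then have "v - w \<in> span B"
      using v w(2) by (intro kernel subspace_diff[OF S]) (simp_all add: module_hom.diff[OF f])
    moreover have "w \<in> span (B \<union> g ` I)" "span B \<subseteq> span (B \<union> g ` I)"
      using w(1) span_mono[of "g ` I" "B \<union> g ` I"] span_mono[of B "B \<union> g ` I"] by auto
    ultimately have "(v - w) + w \<in> span (B \<union> g ` I)"
      by (intro span_add) auto
    then show "v \<in> span (B \<union> g ` I)" by simp
  qed
  then have "dim S \<le> card (B \<union> g ` I)"
    using \<open>finite B\<close> \<open>finite I\<close> by (intro dim_le_card) auto
  also have "\<dots> \<le> card B + card (g ` I)"
    by (rule card_Un_le)
  also have "\<dots> \<le> card B + card E"
    using card_image_le[OF \<open>finite I\<close>, of g] \<open>card I \<le> card E\<close> by linarith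
  finally show ?thesis .
qed

lemma limsup_ln_ratio_le_of_poly_bound:
  fixes g :: "nat \<Rightarrow> nat"
  assumes "\<And>k. g k \<le> K * (k + 1) ^ m"
  shows "limsup (\<lambda>k. ereal (ln (real (g k)) / ln (real k))) \<le> ereal (real m)"
proof -
  define C where "C = real K + 1"
  define h where "h = (\<lambda>k::nat. (ln C + real m * ln (real k + 1)) / ln (real k))"
  have "(h \<longlongrightarrow> real m) sequentially"
    unfolding h_def C_def by real_asymp
  then have "limsup (\<lambda>k. ereal (h k)) = ereal (real m)"
    by (intro lim_imp_Limsup) simp_all
  moreover have "ln (real (g k)) / ln (real k) \<le> h k" if "k \<ge> 2" for k
  proof -
    have "real (g k) \<le> real K * (real k + 1) ^ m"
      using assms[of k] by (metis of_nat_add of_nat_le_iff of_nat_mult of_nat_power of_nat_1)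
    then have "real (g k) \<le> C * (real k + 1) ^ m"
      by (simp add: C_def mult_right_mono order_trans)
    \<comment> \<open>covers \<open>g k = 0\<close>, where \<open>ln 0 = 0\<close>\<close>
    moreover have "1 * 1 \<le> C * (real k + 1) ^ m"
      by (rule mult_mono) (simp_all add: C_def one_le_power)
    ultimately have "ln (real (g k)) \<le> ln (C * (real k + 1) ^ m)"
      by (cases "g k = 0") auto
    also have "\<dots> = ln C + real m * ln (real k + 1)"
      by (simp add: C_def ln_mult ln_realpow)
    finally show ?thesis
      unfolding h_def using that by (simp add: divide_right_mono)
  qed
  then have "eventually (\<lambda>k. ereal (ln (real (g k)) / ln (real k)) \<le> ereal (h k)) sequentially"
    unfolding eventually_sequentially by auto
  ultimately show ?thesis
    using Limsup_mono by metis
qed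

lemma sum_fun_apply: "(\<Sum>a\<in>A. f a) x = (\<Sum>a\<in>A. f a x)"
  by (induction A rule: infinite_finite_induct) auto

lemma sum_single_lookup: "(\<Sum>m\<in>Poly_Mapping.keys p. Poly_Mapping.single m (Poly_Mapping.lookup p m)) = p"
proof (rule poly_mapping_eqI)
  fix k
  show "Poly_Mapping.lookup (\<Sum>m\<in>Poly_Mapping.keys p. Poly_Mapping.single m (Poly_Mapping.lookup p m)) k
      = Poly_Mapping.lookup p k"
    by (cases "k \<in> Poly_Mapping.keys p")
      (auto simp: Poly_Mapping.lookup_sum Poly_Mapping.lookup_single when_def in_keys_iff)
qed

lemma lookup_const_poly_mult:
  "Poly_Mapping.lookup (const_poly c * p) m = c * Poly_Mapping.lookup p m"
  unfolding const_poly_def mult_map_scale_conv_mult[symmetric]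
  by (simp add: Poly_Mapping.map.rep_eq when_def)

lemma var_poly_power: "(var_poly i :: 'k::comm_ring_1 mpoly) ^ k = Poly_Mapping.single (Poly_Mapping.single i k) 1"
  by (induction k)
    (simp_all add: var_poly_def Poly_Mapping.mult_single Poly_Mapping.single_add[symmetric]
      del: Poly_Mapping.single_numeral)

lemma vscale_vector_space: "vector_space (vscale :: 'k::field \<Rightarrow> 'k vfield \<Rightarrow> 'k vfield)"
proof
  fix a b :: 'k and x y :: "'k vfield"
  show "vscale a (x + y) = vscale a x + vscale a y"
    by (rule ext) (simp add: vscale_def distrib_left)
  show "vscale (a + b) x = vscale a x + vscale b x"
    by (rule ext) (simp add: vscale_def const_poly_def Poly_Mapping.single_add distrib_right)
  show "vscale a (vscale b x) = vscale (a * b) x"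
    by (rule ext) (simp add: vscale_def const_poly_def mult.assoc[symmetric] Poly_Mapping.mult_single)
  show "vscale 1 x = x"
    by (rule ext) (simp add: vscale_def const_poly_def)
qed

interpretation vs: vector_space "vscale :: 'k::field \<Rightarrow> 'k vfield \<Rightarrow> 'k vfield"
  by (rule vscale_vector_space)

lemma lie_subalgebra_subspace: "lie_subalgebra n L \<Longrightarrow> vs.subspace L"
  unfolding lie_subalgebra_def vs.subspace_def by blast

subsection \<open>Reduction modulo the square of the first variable\<close>

definition mod_x0_sq :: "'k::comm_ring_1 mpoly \<Rightarrow> 'k mpoly" where
  "mod_x0_sq p = Poly_Mapping.mapp (\<lambda>m c. if Poly_Mapping.lookup m 0 < 2 then c else 0) p"

lemma lookup_mod_x0_sq:
  "Poly_Mapping.lookup (mod_x0_sq p) m = (if Poly_Mapping.lookup m 0 < 2 then Poly_Mapping.lookup p m else 0)"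
  by (auto simp: mod_x0_sq_def Poly_Mapping.lookup_mapp when_def in_keys_iff)

lemma mod_x0_sq_zero [simp]: "mod_x0_sq 0 = 0"
  by (rule poly_mapping_eqI) (simp add: lookup_mod_x0_sq)

lemma mod_x0_sq_eq_0_imp_dvd:
  fixes p :: "'k::comm_ring_1 mpoly"
  assumes "mod_x0_sq p = 0"
  shows "\<exists>g. p = var_poly 0 ^ 2 * g"
proof -
  define X :: "nat \<Rightarrow>\<^sub>0 nat" where "X = Poly_Mapping.single 0 2"
  have X_le: "X + (m - X) = m" if "m \<in> Poly_Mapping.keys p" for m
  proof -
    have "\<not> Poly_Mapping.lookup m 0 < 2"
      using that assms lookup_mod_x0_sq[of p m] by (auto simp: in_keys_iff)
    then show ?thesis
      by (intro poly_mapping_eqI)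
        (auto simp: X_def Poly_Mapping.lookup_add Poly_Mapping.lookup_minus Poly_Mapping.lookup_single
          when_def simp del: Poly_Mapping.single_numeral)
  qed
  have "var_poly 0 ^ 2 * (\<Sum>m\<in>Poly_Mapping.keys p. Poly_Mapping.single (m - X) (Poly_Mapping.lookup p m))
      = (\<Sum>m\<in>Poly_Mapping.keys p. Poly_Mapping.single (X + (m - X)) (Poly_Mapping.lookup p m))"
    by (simp add: var_poly_power X_def sum_distrib_left Poly_Mapping.mult_single del: Poly_Mapping.single_numeral)
  also have "\<dots> = p"
    using X_le by (simp add: sum_single_lookup cong: sum.cong)
  finally show ?thesis by metis
qed

definition vmod_x0_sq :: "'k::comm_ring_1 vfield \<Rightarrow> 'k vfield" where
  "vmod_x0_sq v = (\<lambda>j. mod_x0_sq (v j))"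

lemma module_hom_vmod_x0_sq: "module_hom vscale vscale (vmod_x0_sq :: 'k::field vfield \<Rightarrow> 'k vfield)"
proof (rule module_hom.intro[OF vs.module_axioms vs.module_axioms], unfold_locales)
  fix a b :: "'k vfield" and r :: 'k
  show "vmod_x0_sq (a + b) = vmod_x0_sq a + vmod_x0_sq b"
    by (rule ext, rule poly_mapping_eqI) (simp add: vmod_x0_sq_def lookup_mod_x0_sq Poly_Mapping.lookup_add)
  show "vmod_x0_sq (vscale r b) = vscale r (vmod_x0_sq b)"
    by (rule ext, rule poly_mapping_eqI) (simp add: vmod_x0_sq_def vscale_def lookup_mod_x0_sq lookup_const_poly_mult)
qed

lemma vmod_x0_sq_eq_0_imp_L20:
  assumes "v \<in> L" "vmod_x0_sq v = 0"
  shows "v \<in> L20 n L"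
proof -
  have "mod_x0_sq (v j) = 0" for j
    using fun_cong[OF assms(2), of j] by (simp add: vmod_x0_sq_def)
  then show ?thesis
    using assms(1) mod_x0_sq_eq_0_imp_dvd by (auto simp: L20_def)
qed

subsection \<open>Exponent bounds\<close>

definition exps_le :: "nat \<Rightarrow> 'k::comm_ring_1 mpoly \<Rightarrow> bool" where
  "exps_le e p \<longleftrightarrow> (\<forall>m\<in>Poly_Mapping.keys p. \<forall>i. Poly_Mapping.lookup m i \<le> e)"

definition exp_bounded :: "nat \<Rightarrow> 'k::comm_ring_1 vfield set" where
  "exp_bounded e = {v. \<forall>j. exps_le e (v j)}"

lemma exps_le_zero [simp]: "exps_le e 0"
  by (simp add: exps_le_def)

lemma exps_le_mono: "exps_le a p \<Longrightarrow> a \<le> b \<Longrightarrow> exps_le b p"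
  unfolding exps_le_def using le_trans by blast

lemma exps_le_add: "exps_le e p \<Longrightarrow> exps_le e q \<Longrightarrow> exps_le e (p + q)"
  using Poly_Mapping.keys_add[of p q] by (force simp: exps_le_def)

lemma exps_le_diff: "exps_le e p \<Longrightarrow> exps_le e q \<Longrightarrow> exps_le e (p - q)"
  using exps_le_add[of e p "- q"] by (simp add: exps_le_def)

lemma exps_le_sum: "(\<And>x. x \<in> A \<Longrightarrow> exps_le e (f x)) \<Longrightarrow> exps_le e (sum f A)"
  by (induction A rule: infinite_finite_induct) (auto intro: exps_le_add)

lemma exps_le_const_poly_mult: "exps_le e p \<Longrightarrow> exps_le e (const_poly c * p)"
  by (auto simp: exps_le_def in_keys_iff lookup_const_poly_mult)

lemma exps_le_mult: "exps_le a p \<Longrightarrow> exps_le b q \<Longrightarrow> exps_le (a + b) (p * q)"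
  using Poly_Mapping.keys_mult[of p q]
  by (fastforce simp: exps_le_def Poly_Mapping.lookup_add intro: add_mono)

lemma exps_le_pdiff: "exps_le e p \<Longrightarrow> exps_le e (pdiff i p)"
  unfolding pdiff_def
  by (rule exps_le_sum) (auto simp: exps_le_def Poly_Mapping.lookup_minus intro: le_trans[OF diff_le_self])

lemma exp_bounded_subspace: "vs.subspace (exp_bounded e)"
  unfolding vs.subspace_def exp_bounded_def vscale_def by (auto intro: exps_le_add exps_le_const_poly_mult)

lemma exp_bounded_mono: "a \<le> b \<Longrightarrow> exp_bounded a \<subseteq> exp_bounded b"
  unfolding exp_bounded_def by (auto intro: exps_le_mono)

lemma lie_exp_bounded:
  assumes "v \<in> exp_bounded a" "w \<in> exp_bounded b"
  shows "lie n v w \<in> exp_bounded (a + b)"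
proof -
  have "exps_le (a + b) (v i * pdiff i (w j))" "exps_le (b + a) (w i * pdiff i (v j))" for i j
    using assms by (auto simp: exp_bounded_def intro: exps_le_mult exps_le_pdiff)
  then show ?thesis
    unfolding exp_bounded_def lie_def by (auto simp: add.commute intro!: exps_le_sum exps_le_diff)
qed

lemma W_exp_bounded: "v \<in> W n \<Longrightarrow> \<exists>e. v \<in> exp_bounded e"
proof -
  assume v: "v \<in> W n"
  define X where "X = (\<Union>j<n. \<Union>m\<in>Poly_Mapping.keys (v j). Poly_Mapping.lookup m ` {..<n})"
  have "finite X" unfolding X_def by auto
  have "exps_le (Max (insert 0 X)) (v j)" for j
  proof (cases "j < n")
    case True
    have "Poly_Mapping.lookup m i \<le> Max (insert 0 X)" if "m \<in> Poly_Mapping.keys (v j)" for m i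
    proof (cases "i < n")
      case True
      then have "Poly_Mapping.lookup m i \<in> X"
        unfolding X_def using that \<open>j < n\<close> by (intro UN_I[of j] UN_I[of m] imageI) auto
      then show ?thesis using \<open>finite X\<close> by simp
    next
      case False
      then show ?thesis using v that unfolding W_def poly_in_def by auto
    qed
    then show ?thesis unfolding exps_le_def by blast
  qed (use v in \<open>simp add: W_def exps_le_def\<close>)
  then show ?thesis unfolding exp_bounded_def by blast
qed

lemma finite_subset_W_exp_bounded:
  "finite F \<Longrightarrow> F \<subseteq> W n \<Longrightarrow> \<exists>d. F \<subseteq> exp_bounded d"
proof (induction F rule: finite_induct)
  case (insert x F)
  obtain d where "F \<subseteq> exp_bounded d"
    using insert by auto
  moreover obtain e where "x \<in> exp_bounded e"
    using insert.prems W_exp_bounded[of x n] by auto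
  ultimately have "insert x F \<subseteq> exp_bounded (max d e)"
    using exp_bounded_mono[of d "max d e"] exp_bounded_mono[of e "max d e"] by auto
  then show ?case by blast
qed simp

lemma span_subset_subalgebra_exp_bounded:
  assumes "lie_subalgebra n L" "G \<subseteq> L \<inter> exp_bounded e"
  shows "vspan G \<subseteq> L \<inter> exp_bounded e"
  using assms vs.span_minimal[OF _ lie_subalgebra_subspace[OF assms(1)]] vs.span_minimal[OF _ exp_bounded_subspace]
  by (meson le_inf_iff)

lemma lower_central_subset_exp_bounded:
  assumes L: "lie_subalgebra n L" and F: "F \<subseteq> L" "F \<subseteq> exp_bounded d"
  shows "lower_central n (vspan F) i \<subseteq> L \<inter> exp_bounded ((i + 1) * d)"
proof -
  note span_subset = span_subset_subalgebra_exp_bounded[OF L]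
  have V: "vspan F \<subseteq> L \<inter> exp_bounded d"
    using F by (intro span_subset) simp
  show ?thesis
  proof (induction i)
    case 0
    show ?case using V by (simp add: vs.span_span)
  next
    case (Suc i)
    have "lie n a b \<in> L \<inter> exp_bounded ((Suc i + 1) * d)"
      if a: "a \<in> lower_central n (vspan F) i" and b: "b \<in> vspan F" for a b
    proof -
      have "lie n a b \<in> L"
        using a b Suc V L unfolding lie_subalgebra_def by blast
      moreover have "lie n a b \<in> exp_bounded ((i + 1) * d + d)"
        using a b Suc V by (intro lie_exp_bounded) auto
      ultimately show ?thesis by (simp add: add.commute)
    qed
    then show ?case
      by (simp only: lower_central.simps) (intro span_subset, blast)
  qed
qed

subsection \<open>Counting reduced monomials\<close>

definition reduced_monomials :: "nat \<Rightarrow> nat \<Rightarrow> (nat \<Rightarrow>\<^sub>0 nat) set" where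
  "reduced_monomials n e = {m. (\<forall>i. Poly_Mapping.lookup m i \<le> e)
     \<and> (\<forall>i. n \<le> i \<longrightarrow> Poly_Mapping.lookup m i = 0) \<and> Poly_Mapping.lookup m 0 < 2}"

lemma card_reduced_monomials:
  assumes "n \<ge> 1"
  shows "finite (reduced_monomials n e) \<and> card (reduced_monomials n e) \<le> 2 * (e + 1) ^ (n - 1)"
proof -
  define A where "A = (\<lambda>i::nat. if i = 0 then {..<2::nat} else {..e})"
  define r where "r = (\<lambda>m::nat \<Rightarrow>\<^sub>0 nat. restrict (Poly_Mapping.lookup m) {..<n})"
  have inj: "inj_on r (reduced_monomials n e)"
  proof (rule inj_onI, rule poly_mapping_eqI)
    fix x y i assume x: "x \<in> reduced_monomials n e" and y: "y \<in> reduced_monomials n e"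
      and "r x = r y"
    then have "r x i = r y i" by simp
    then show "Poly_Mapping.lookup x i = Poly_Mapping.lookup y i"
      using x y by (cases "i < n") (auto simp: r_def reduced_monomials_def)
  qed
  have sub: "r ` reduced_monomials n e \<subseteq> PiE {..<n} A"
    unfolding r_def
    by (rule image_subsetI, subst restrict_PiE_iff) (auto simp: reduced_monomials_def A_def)
  have fin: "finite (PiE {..<n} A)"
    by (simp add: A_def finite_PiE)
  have "{..<n} = insert 0 {1..<n}" using assms by auto
  then have "card (PiE {..<n} A) = card (A 0) * (\<Prod>i\<in>{1..<n}. card (A i))"
    by (simp add: card_PiE)
  also have "(\<Prod>i\<in>{1..<n}. card (A i)) = (\<Prod>i\<in>{1..<n}. e + 1)"
    by (rule prod.cong) (auto simp: A_def)
  finally have "card (PiE {..<n} A) = 2 * (e + 1) ^ (n - 1)"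
    by (simp add: A_def)
  moreover have "finite (reduced_monomials n e)"
    using inj sub fin finite_imageD finite_subset by blast
  ultimately show ?thesis
    using card_inj_on_le[OF inj sub fin] by simp
qed

definition component_field :: "nat \<Rightarrow> 'k::comm_ring_1 mpoly \<Rightarrow> 'k vfield" where
  "component_field j p = (\<lambda>j'. if j' = j then p else 0)"

definition reduced_monomial_fields :: "nat \<Rightarrow> nat \<Rightarrow> 'k::comm_ring_1 vfield set" where
  "reduced_monomial_fields n e =
     (\<lambda>(j, m). component_field j (Poly_Mapping.single m 1)) ` ({..<n} \<times> reduced_monomials n e)"

lemma card_reduced_monomial_fields:
  assumes "n \<ge> 1"
  shows "finite (reduced_monomial_fields n e)
    \<and> card (reduced_monomial_fields n e) \<le> n * (2 * (e + 1) ^ (n - 1))"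
proof -
  have f: "finite ({..<n} \<times> reduced_monomials n e)"
    using card_reduced_monomials[OF assms] by simp
  have "card (reduced_monomial_fields n e) \<le> card ({..<n} \<times> reduced_monomials n e)"
    unfolding reduced_monomial_fields_def by (rule card_image_le[OF f])
  also have "\<dots> \<le> n * (2 * (e + 1) ^ (n - 1))"
    using card_reduced_monomials[OF assms] by (simp add: card_cartesian_product)
  finally show ?thesis
    using f by (simp add: reduced_monomial_fields_def)
qed

lemma component_field_in_span:
  "component_field j p \<in> vs.span ((\<lambda>m. component_field j (Poly_Mapping.single m 1)) ` Poly_Mapping.keys p)"
proof -
  have "component_field j p
      = (\<Sum>m\<in>Poly_Mapping.keys p. vscale (Poly_Mapping.lookup p m) (component_field j (Poly_Mapping.single m 1)))"
    by (rule ext)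
      (simp add: sum_fun_apply vscale_def component_field_def const_poly_def Poly_Mapping.mult_single
        sum_single_lookup)
  then show ?thesis
    by (simp add: vs.span_base vs.span_scale vs.span_sum)
qed

lemma vmod_x0_sq_in_span:
  assumes "v \<in> W n" "v \<in> exp_bounded e"
  shows "vmod_x0_sq v \<in> vspan (reduced_monomial_fields n e)"
proof -
  have "vmod_x0_sq v = (\<Sum>j<n. component_field j (mod_x0_sq (v j)))"
  proof
    fix j'
    show "vmod_x0_sq v j' = (\<Sum>j<n. component_field j (mod_x0_sq (v j))) j'"
      using assms(1) by (cases "j' < n") (simp_all add: sum_fun_apply component_field_def vmod_x0_sq_def W_def)
  qed
  moreover have "component_field j (mod_x0_sq (v j)) \<in> vspan (reduced_monomial_fields n e)" if "j < n" for j
  proof -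
    have "Poly_Mapping.keys (mod_x0_sq (v j)) \<subseteq> reduced_monomials n e"
      using assms unfolding reduced_monomials_def exp_bounded_def exps_le_def W_def poly_in_def
      by (auto simp: in_keys_iff lookup_mod_x0_sq split: if_splits)
    then have "(\<lambda>m. component_field j (Poly_Mapping.single m 1)) ` Poly_Mapping.keys (mod_x0_sq (v j))
        \<subseteq> reduced_monomial_fields n e"
      using that unfolding reduced_monomial_fields_def by auto
    then show ?thesis
      using component_field_in_span vs.span_mono by blast
  qed
  ultimately show ?thesis
    by (auto intro!: vs.span_sum)
qed

lemma dim_subspace_exp_bounded_le:
  fixes L :: "'k::field vfield set"
  assumes "n \<ge> 1" and L: "L \<subseteq> W n" and "finite B" "L20 n L \<subseteq> vspan B"
    and S: "vs.subspace S" "S \<subseteq> L \<inter> exp_bounded e"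
  shows "vdim S \<le> card B + n * (2 * (e + 1) ^ (n - 1))"
proof -
  have "vdim S \<le> card B + card (reduced_monomial_fields n e :: 'k vfield set)"
  proof (rule vs.dim_le_card_kernel_image[OF module_hom_vmod_x0_sq S(1)])
    show "vmod_x0_sq ` S \<subseteq> vspan (reduced_monomial_fields n e)"
      using S(2) L vmod_x0_sq_in_span by blast
    show "finite (reduced_monomial_fields n e)"
      using card_reduced_monomial_fields[OF \<open>n \<ge> 1\<close>] by blast
    show "v \<in> vspan B" if "v \<in> S" "vmod_x0_sq v = 0" for v
      using that S(2) \<open>L20 n L \<subseteq> vspan B\<close> vmod_x0_sq_eq_0_imp_L20 by blast
  qed fact
  moreover have "card (reduced_monomial_fields n e :: 'k vfield set) \<le> n * (2 * (e + 1) ^ (n - 1))"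
    using card_reduced_monomial_fields[OF \<open>n \<ge> 1\<close>] by blast
  ultimately show ?thesis
    by linarith
qed

lemma growth_dim_poly_bound:
  fixes L :: "'k::field vfield set"
  assumes "n \<ge> 1" and L: "lie_subalgebra n L" and B: "finite B" "L20 n L \<subseteq> vspan B"
    and F: "finite F" "F \<subseteq> L"
  shows "\<exists>K. \<forall>k. growth_dim n (vspan F) k \<le> K * (k + 1) ^ (n - 1)"
proof -
  have LW: "L \<subseteq> W n" using L unfolding lie_subalgebra_def by blast
  obtain d where d: "F \<subseteq> exp_bounded d"
    using finite_subset_W_exp_bounded F LW by blast
  have "growth_dim n (vspan F) k \<le> (card B + n * (2 * (d + 1) ^ (n - 1))) * (k + 1) ^ (n - 1)" for k
  proof -
    let ?e = "(k + 1) * d"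
    have "lower_central n (vspan F) i \<subseteq> L \<inter> exp_bounded ?e" if "i \<le> k" for i
      using lower_central_subset_exp_bounded[OF L F(2) d, of i] exp_bounded_mono[of "(i + 1) * d" ?e] that
      by auto
    then have "vspan (\<Union>i\<le>k. lower_central n (vspan F) i) \<subseteq> L \<inter> exp_bounded ?e"
      by (intro span_subset_subalgebra_exp_bounded[OF L]) auto
    then have "growth_dim n (vspan F) k \<le> card B + n * (2 * (?e + 1) ^ (n - 1))"
      unfolding growth_dim_def by (intro dim_subspace_exp_bounded_le[OF \<open>n \<ge> 1\<close> LW B]) auto
    also have "(?e + 1) ^ (n - 1) \<le> (d + 1) ^ (n - 1) * (k + 1) ^ (n - 1)"
      unfolding power_mult_distrib[symmetric] by (rule power_mono) simp_all
    finally have "growth_dim n (vspan F) k \<le> card B + n * (2 * ((d + 1) ^ (n - 1) * (k + 1) ^ (n - 1)))"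
      by simp
    moreover have "card B \<le> card B * (k + 1) ^ (n - 1)"
      by simp
    ultimately have "growth_dim n (vspan F) k
        \<le> card B * (k + 1) ^ (n - 1) + n * (2 * ((d + 1) ^ (n - 1) * (k + 1) ^ (n - 1)))"
      by linarith
    then show ?thesis
      by (simp add: algebra_simps)
  qed
  then show ?thesis by blast
qed

theorem mainTheorem18:
  fixes L :: "'k::field_char_0 vfield set" and n :: nat
  assumes "n \<ge> 1" and "lie_subalgebra n L" and "GKdim n L = ereal (real n)"
  shows "\<not> (\<exists>B. finite B \<and> L20 n L \<subseteq> vspan B)"
proof
  assume "\<exists>B. finite B \<and> L20 n L \<subseteq> vspan B"
  then obtain B where B: "finite B" "L20 n L \<subseteq> vspan B" by blast
  have "GKdim n L \<le> ereal (real (n - 1))"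
    unfolding GKdim_def
  proof (rule SUP_least)
    fix F assume "F \<in> {F. finite F \<and> F \<subseteq> L}"
    then obtain K where "\<And>k. growth_dim n (vspan F) k \<le> K * (k + 1) ^ (n - 1)"
      using growth_dim_poly_bound[OF assms(1,2) B] by blast
    then show "limsup (\<lambda>k. ereal (ln (real (growth_dim n (vspan F) k)) / ln (real k)))
        \<le> ereal (real (n - 1))"
      by (rule limsup_ln_ratio_le_of_poly_bound)
  qed
  then show False using assms(1,3) by simp
qed

end
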